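(* Let $\mathcal{G}=(V,\mathit{Act},\mathcal{R})$ be a normed BPA system. For all $\alpha,\gamma\in V^*$: $\alpha\gamma\sim\gamma$ if and only if $\alpha\in(R_\gamma)^*$, where $R_\gamma=\{X\in V\mid X\gamma\sim\gamma\}$.
   Context: A BPA system $\mathcal{G}=(V,\mathit{Act},\mathcal{R})$: finite variables $V$, finite actions $\mathit{Act}$ (possibly containing the silent action $\tau$), rules $A\xrightarrow{a}\alpha$ ($A\in V,\alpha\in V^*$). LTS $\mathcal{L}_\mathcal{G}$: states $V^*$, transitions $A\beta\xrightarrow{a}\alpha\beta$ for rules $A\xrightarrow{a}\alpha$, $\beta\in V^*$. $\mathcal{G}$ is normed if every variable $A$ satisfies $A\xrightarrow{w}\varepsilon$ for some $w\in\mathit{Act}^*$. $\sim$ denotes branching bisimilarity in $\mathcal{L}_\mathcal{G}$ (largest relation $\mathcal{B}$ such that for $(s,t)\in\mathcal{B}$ each move $s\xrightarrow{a}s'$ is matched by $a=\tau$ with $(s',t)\in\mathcal{B}$, or by a path $t=t_0\xrightarrow{\tau}\cdots\xrightarrow{\tau}t_k\xrightarrow{a}t'$ with $(s',t')\in\mathcal{B}$, $(s,t_i)\in\mathcal{B}$ for $i\in[1,k]$; and symmetrically). *)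

theory Defs
  imports Main
begin

text \<open>A BPA system with variables of finite type 'v, actions of finite type 'a
  (one of which, tau, is the silent action) and a set of rules
  (A, a, alpha) standing for A --a--> alpha.\<close>

definition step :: "('v \<times> 'a \<times> 'v list) set \<Rightarrow> 'v list \<Rightarrow> 'a \<Rightarrow> 'v list \<Rightarrow> bool" where
  "step R s a s' \<longleftrightarrow> (\<exists>A alpha beta. (A, a, alpha) \<in> R \<and> s = A # beta \<and> s' = alpha @ beta)"

inductive steps :: "('v \<times> 'a \<times> 'v list) set \<Rightarrow> 'v list \<Rightarrow> 'a list \<Rightarrow> 'v list \<Rightarrow> bool"
  for R where
  steps_nil: "steps R s [] s"
| steps_cons: "step R s a t \<Longrightarrow> steps R t w u \<Longrightarrow> steps R s (a # w) u"

definition normed :: "('v \<times> 'a \<times> 'v list) set \<Rightarrow> bool" where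
  "normed R \<longleftrightarrow> (\<forall>A. \<exists>w. steps R [A] w [])"

definition branching_transfer ::
  "('v \<times> 'a \<times> 'v list) set \<Rightarrow> 'a \<Rightarrow> ('v list \<Rightarrow> 'v list \<Rightarrow> bool) \<Rightarrow> 'v list \<Rightarrow> 'v list \<Rightarrow> bool" where
  "branching_transfer R tau B s t \<longleftrightarrow>
     (\<forall>a s'. step R s a s' \<longrightarrow>
        (a = tau \<and> B s' t) \<or>
        (\<exists>k ts t'. length ts = Suc k \<and> ts ! 0 = t \<and>
            (\<forall>i<k. step R (ts ! i) tau (ts ! Suc i)) \<and>
            step R (ts ! k) a t' \<and> B s' t' \<and>
            (\<forall>i\<in>{1..k}. B s (ts ! i))))"

definition branching_bisimulation ::
  "('v \<times> 'a \<times> 'v list) set \<Rightarrow> 'a \<Rightarrow> ('v list \<Rightarrow> 'v list \<Rightarrow> bool) \<Rightarrow> bool" where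
  "branching_bisimulation R tau B \<longleftrightarrow>
     (\<forall>s t. B s t \<longrightarrow> branching_transfer R tau B s t \<and>
                       branching_transfer R tau (\<lambda>x y. B y x) t s)"

definition bbisim :: "('v \<times> 'a \<times> 'v list) set \<Rightarrow> 'a \<Rightarrow> 'v list \<Rightarrow> 'v list \<Rightarrow> bool" where
  "bbisim R tau s t \<longleftrightarrow> (\<exists>B. branching_bisimulation R tau B \<and> B s t)"

definition R_gamma :: "('v \<times> 'a \<times> 'v list) set \<Rightarrow> 'a \<Rightarrow> 'v list \<Rightarrow> 'v set" where
  "R_gamma R tau gamma = {X. bbisim R tau (X # gamma) gamma}"

end

theory Submission
  imports Defs
begin

text \<open>
  Branching bisimilarity \<open>\<approx>\<close> is an equivalence and a congruence for prefixing, which gives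
  the "if" direction by induction on \<open>\<alpha>\<close>: \<open>X \<alpha>' \<gamma> \<approx> X \<gamma> \<approx> \<gamma>\<close>.
  For "only if", call a step inert if its source and target are bisimilar, and let the branching
  norm of a state be the least number of non-inert steps on a path to the empty word (it exists
  because the system is normed).  Bisimilar states have the same branching norm.  A cheapest path
  from \<open>e z \<gamma>\<close> to the empty word passes through \<open>z \<gamma>\<close> and then \<open>\<gamma>\<close>; if \<open>e z \<gamma> \<approx> \<gamma>\<close>, its
  cost equals the norm of \<open>\<gamma>\<close>, so the segment from \<open>z \<gamma>\<close> to \<open>\<gamma>\<close> is inert and \<open>z \<gamma> \<approx> \<gamma>\<close>.
  Applied to \<open>z = X z'\<close> and to \<open>z'\<close> this yields \<open>X \<gamma> \<approx> X z' \<gamma> \<approx> \<gamma>\<close> for every \<open>X\<close> in \<open>\<alpha>\<close>.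
\<close>

context
  fixes R :: "('v \<times> 'a \<times> 'v list) set" and tau :: 'a
begin

abbreviation bisimilar :: "'v list \<Rightarrow> 'v list \<Rightarrow> bool" (infix "\<approx>" 50) where
  "s \<approx> t \<equiv> bbisim R tau s t"

text \<open>\<open>tau_path P t u\<close>: a \<open>\<tau>\<close>-path from \<open>t\<close> to \<open>u\<close> all of whose states after \<open>t\<close> satisfy \<open>P\<close>;
  it replaces the index-based path in \<open>branching_transfer\<close>.\<close>

inductive tau_path :: "('v list \<Rightarrow> bool) \<Rightarrow> 'v list \<Rightarrow> 'v list \<Rightarrow> bool" for P where
  tau_path_refl: "tau_path P t t"
| tau_path_step: "step R t tau t' \<Longrightarrow> P t' \<Longrightarrow> tau_path P t' u \<Longrightarrow> tau_path P t u"

lemma tau_path_iff_nth: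
  "tau_path P t u \<longleftrightarrow>
     (\<exists>k ts. length ts = Suc k \<and> ts ! 0 = t \<and> ts ! k = u \<and>
        (\<forall>i<k. step R (ts ! i) tau (ts ! Suc i)) \<and> (\<forall>i\<in>{1..k}. P (ts ! i)))"
  (is "_ \<longleftrightarrow> ?nth_path")
proof
  assume "tau_path P t u"
  then show ?nth_path
  proof (induction rule: tau_path.induct)
    case (tau_path_refl t)
    show ?case by (intro exI[of _ 0] exI[of _ "[t]"]) auto
  next
    case (tau_path_step t t' u)
    then obtain k ts where ts: "length ts = Suc k" "ts ! 0 = t'" "ts ! k = u"
      "\<forall>i<k. step R (ts ! i) tau (ts ! Suc i)" "\<forall>i\<in>{1..k}. P (ts ! i)" by blast
    have "\<forall>i<Suc k. step R ((t # ts) ! i) tau ((t # ts) ! Suc i)"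
      using ts tau_path_step.hyps by (auto simp: less_Suc_eq_0_disj)
    moreover have "\<forall>i\<in>{1..Suc k}. P ((t # ts) ! i)"
      using ts tau_path_step.hyps by (auto simp: Suc_le_eq nth_Cons split: nat.split)
    ultimately show ?case using ts by (intro exI[of _ "Suc k"] exI[of _ "t # ts"]) auto
  qed
next
  assume ?nth_path
  then obtain k ts where "length ts = Suc k" "ts ! 0 = t" "ts ! k = u"
    "\<forall>i<k. step R (ts ! i) tau (ts ! Suc i)" "\<forall>i\<in>{1..k}. P (ts ! i)" by blast
  then show "tau_path P t u"
  proof (induction k arbitrary: ts t)
    case 0
    then show ?case by (simp add: tau_path_refl)
  next
    case (Suc k)
    have nth_tl: "tl ts ! i = ts ! Suc i" for i
      using Suc.prems(1) by (cases ts) auto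
    have "tau_path P (ts ! 1) u"
      using Suc.prems by (intro Suc.IH[of "tl ts"]) (auto simp: nth_tl)
    then show ?case
      using Suc.prems by (intro tau_path_step[of t "ts ! 1"]) auto
  qed
qed

lemma tau_path_mono: "tau_path P t u \<Longrightarrow> (\<And>x. P x \<Longrightarrow> Q x) \<Longrightarrow> tau_path Q t u"
  by (induction rule: tau_path.induct) (auto intro: tau_path.intros)

lemma tau_path_trans: "tau_path P t u \<Longrightarrow> tau_path P u v \<Longrightarrow> tau_path P t v"
  by (induction rule: tau_path.induct) (auto intro: tau_path.intros)

lemma tau_path_snoc: "tau_path P t u \<Longrightarrow> step R u tau v \<Longrightarrow> P v \<Longrightarrow> tau_path P t v"
  by (erule tau_path_trans) (auto intro: tau_path.intros)

lemma tau_path_end: "tau_path P t u \<Longrightarrow> u = t \<or> P u"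
  by (induction rule: tau_path.induct) auto

lemma tau_path_last_step:
  "tau_path P t u \<Longrightarrow> u = t \<or> (\<exists>u0. tau_path P t u0 \<and> step R u0 tau u \<and> P u)"
  by (induction rule: tau_path.induct) (auto intro: tau_path.intros)

lemma step_Nil [simp]: "\<not> step R [] a s'"
  by (simp add: step_def)

lemma step_Cons: "step R (A # b) a s' \<longleftrightarrow> (\<exists>al. (A, a, al) \<in> R \<and> s' = al @ b)"
  by (auto simp: step_def)

lemma tau_path_Nil: "tau_path P [] u \<Longrightarrow> u = []"
  by (erule tau_path.cases) auto

definition transfer :: "('v list \<Rightarrow> 'v list \<Rightarrow> bool) \<Rightarrow> 'v list \<Rightarrow> 'v list \<Rightarrow> bool" where
  "transfer B s t \<longleftrightarrow>
     (\<forall>a s'. step R s a s' \<longrightarrow>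
        (a = tau \<and> B s' t) \<or> (\<exists>t1 t'. tau_path (B s) t t1 \<and> step R t1 a t' \<and> B s' t'))"

lemma branching_transfer_iff_transfer: "branching_transfer R tau B s t \<longleftrightarrow> transfer B s t"
  unfolding branching_transfer_def transfer_def tau_path_iff_nth by blast

lemma transfer_mono:
  assumes "transfer B s t" and "\<And>x y. B x y \<Longrightarrow> B' x y"
  shows "transfer B' s t"
proof -
  have "tau_path (B s) t t1 \<Longrightarrow> tau_path (B' s) t t1" for t1
    by (erule tau_path_mono) (rule assms(2))
  then show ?thesis using assms unfolding transfer_def by meson
qed

lemma branching_bisimulation_iff:
  "branching_bisimulation R tau B \<longleftrightarrow>
     (\<forall>s t. B s t \<longrightarrow> transfer B s t \<and> transfer (\<lambda>x y. B y x) t s)"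
  unfolding branching_bisimulation_def branching_transfer_iff_transfer ..

lemma bbisim_sym:
  assumes "s \<approx> t"
  shows "t \<approx> s"
proof -
  obtain B where "branching_bisimulation R tau B" "B s t"
    using assms unfolding bbisim_def by blast
  then have "branching_bisimulation R tau (\<lambda>x y. B y x)" "B s t"
    unfolding branching_bisimulation_def by auto
  then show ?thesis unfolding bbisim_def by blast
qed

lemma bbisim_transfer:
  assumes "s \<approx> t"
  shows "transfer (\<approx>) s t"
proof -
  obtain B where B: "branching_bisimulation R tau B" "B s t"
    using assms unfolding bbisim_def by blast
  have "transfer B s t" using B unfolding branching_bisimulation_iff by blast
  moreover have "B x y \<Longrightarrow> x \<approx> y" for x y using B(1) unfolding bbisim_def by blast
  ultimately show ?thesis by (rule transfer_mono)
qed

lemma bbisim_coinduct_symp: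
  assumes "symp B" and "\<And>s t. B s t \<Longrightarrow> transfer B s t" and "B s t"
  shows "s \<approx> t"
proof -
  have conv: "(\<lambda>x y. B y x) = B" using assms(1) by (auto intro!: ext dest: sympD)
  have "branching_bisimulation R tau B"
    unfolding branching_bisimulation_iff conv using assms(1,2) by (blast dest: sympD)
  then show ?thesis using assms(3) unfolding bbisim_def by blast
qed

lemma bbisim_refl: "s \<approx> s"
  by (rule bbisim_coinduct_symp[of "(=)"]) (auto intro: sympI tau_path_refl simp: transfer_def)

lemma tau_path_transfer:
  assumes "tau_path ((\<approx>) s) u u1" and "s \<approx> u" and "u \<approx> t"
  shows "\<exists>t1. tau_path (((\<approx>) OO (\<approx>)) s) t t1 \<and> u1 \<approx> t1"
  using assms
proof (induction arbitrary: t rule: tau_path.induct)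
  case (tau_path_refl u)
  then show ?case by (auto intro: tau_path.intros)
next
  case (tau_path_step u u2 u1)
  have "u2 \<approx> t \<or> (\<exists>t3 t4. tau_path ((\<approx>) u) t t3 \<and> step R t3 tau t4 \<and> u2 \<approx> t4)"
    using bbisim_transfer[OF tau_path_step.prems(2)] tau_path_step.hyps(1)
    unfolding transfer_def by blast
  then show ?case
  proof
    assume "u2 \<approx> t"
    then show ?case using tau_path_step.IH tau_path_step.hyps by blast
  next
    assume "\<exists>t3 t4. tau_path ((\<approx>) u) t t3 \<and> step R t3 tau t4 \<and> u2 \<approx> t4"
    then obtain t3 t4 where t3: "tau_path ((\<approx>) u) t t3" "step R t3 tau t4" "u2 \<approx> t4"
      by blast
    have "tau_path (((\<approx>) OO (\<approx>)) s) t t3"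
      by (rule tau_path_mono[OF t3(1)]) (use tau_path_step.prems(1) in blast)
    then have to_t4: "tau_path (((\<approx>) OO (\<approx>)) s) t t4"
      by (rule tau_path_snoc[OF _ t3(2)]) (use t3(3) tau_path_step.hyps(2) in blast)
    obtain t1 where "tau_path (((\<approx>) OO (\<approx>)) s) t4 t1" "u1 \<approx> t1"
      using tau_path_step.IH[OF tau_path_step.hyps(2) t3(3)] by blast
    then show ?case using tau_path_trans[OF to_t4] by blast
  qed
qed

lemma transfer_bbisim_OO:
  assumes su: "s \<approx> u" and ut: "u \<approx> t"
  shows "transfer ((\<approx>) OO (\<approx>)) s t"
  unfolding transfer_def
proof (intro allI impI)
  fix a s' assume "step R s a s'"
  then consider "a = tau" "s' \<approx> u"
    | u1 u' where "tau_path ((\<approx>) s) u u1" "step R u1 a u'" "s' \<approx> u'"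
    using bbisim_transfer[OF su] unfolding transfer_def by blast
  then show "a = tau \<and> ((\<approx>) OO (\<approx>)) s' t \<or>
    (\<exists>t1 t'. tau_path (((\<approx>) OO (\<approx>)) s) t t1 \<and> step R t1 a t' \<and> ((\<approx>) OO (\<approx>)) s' t')"
  proof cases
    case 1
    then show ?thesis using ut by blast
  next
    case (2 u1 u')
    obtain t1 where t1: "tau_path (((\<approx>) OO (\<approx>)) s) t t1" "u1 \<approx> t1"
      using tau_path_transfer[OF 2(1) su ut] by blast
    have "s \<approx> u1" using tau_path_end[OF 2(1)] su by blast
    consider "a = tau" "u' \<approx> t1"
      | t2 t' where "tau_path ((\<approx>) u1) t1 t2" "step R t2 a t'" "u' \<approx> t'"
      using bbisim_transfer[OF t1(2)] 2(2) unfolding transfer_def by blast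
    then show ?thesis
    proof cases
      case 1
      \<comment> \<open>the \<open>\<tau>\<close>-path from \<open>t\<close> to \<open>t1\<close> itself matches the \<open>\<tau>\<close>-move of \<open>s\<close>\<close>
      then show ?thesis using tau_path_last_step[OF t1(1)] 2(3) by blast
    next
      case (2 t2 t')
      have "tau_path (((\<approx>) OO (\<approx>)) s) t1 t2"
        by (rule tau_path_mono[OF 2(1)]) (use \<open>s \<approx> u1\<close> in blast)
      then show ?thesis using tau_path_trans[OF t1(1)] 2 \<open>s' \<approx> u'\<close> by blast
    qed
  qed
qed

lemma bbisim_trans: "s \<approx> u \<Longrightarrow> u \<approx> t \<Longrightarrow> s \<approx> t"
  by (rule bbisim_coinduct_symp[of "(\<approx>) OO (\<approx>)"])
    (auto intro: sympI dest: bbisim_sym transfer_bbisim_OO)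

lemma bbisim_append_left:
  assumes "d \<approx> d'"
  shows "b @ d \<approx> b @ d'"
proof -
  define C where "C x y \<longleftrightarrow> (\<exists>b d d'. x = b @ d \<and> y = b @ d' \<and> d \<approx> d')" for x y
  have "symp C" unfolding C_def by (intro sympI) (blast dest: bbisim_sym)
  moreover have "transfer C x y" if "C x y" for x y
  proof -
    from \<open>C x y\<close> obtain b d d' where xy: "x = b @ d" "y = b @ d'" "d \<approx> d'"
      unfolding C_def by blast
    show ?thesis
    proof (cases b)
      case Nil
      have "p \<approx> q \<Longrightarrow> C p q" for p q
        unfolding C_def by (intro exI[of _ "[]"] exI[of _ p] exI[of _ q]) simp
      with transfer_mono[OF bbisim_transfer[OF xy(3)]] show ?thesis using xy Nil by simp
    next
      case (Cons A b')
      show ?thesis unfolding transfer_def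
      proof (intro allI impI disjI2)
        fix a s' assume "step R x a s'"
        then obtain al where al: "(A, a, al) \<in> R" "s' = (al @ b') @ d"
          using xy Cons by (auto simp: step_Cons)
        have "step R y a ((al @ b') @ d')" using al xy Cons by (simp add: step_Cons)
        moreover have "C s' ((al @ b') @ d')" unfolding C_def using al(2) xy(3) by blast
        ultimately show "\<exists>t1 t'. tau_path (C x) y t1 \<and> step R t1 a t' \<and> C s' t'"
          by (blast intro: tau_path_refl)
      qed
    qed
  qed
  moreover have "C (b @ d) (b @ d')" unfolding C_def using assms by blast
  ultimately show ?thesis by (rule bbisim_coinduct_symp)
qed

lemma step_append_right: "step R s a t \<Longrightarrow> step R (s @ b) a (t @ b)"
  unfolding step_def by fastforce

lemma steps_append_right: "steps R s w u \<Longrightarrow> steps R (s @ b) w (u @ b)"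
  by (induction rule: steps.induct) (auto intro: steps.intros step_append_right)

lemma steps_trans: "steps R s w u \<Longrightarrow> steps R u v x \<Longrightarrow> steps R s (w @ v) x"
  by (induction rule: steps.induct) (auto intro: steps.intros)

lemma normed_steps_Nil:
  assumes "normed R"
  shows "\<exists>w. steps R s w []"
proof (induction s)
  case Nil
  show ?case by (blast intro: steps_nil)
next
  case (Cons A s)
  obtain w where "steps R [A] w []" using assms unfolding normed_def by blast
  then have "steps R (A # s) w s" using steps_append_right[of "[A]" w "[]" s] by simp
  then show ?case using Cons steps_trans by blast
qed

inductive cost_path :: "'v list \<Rightarrow> nat \<Rightarrow> 'v list \<Rightarrow> bool" where
  cost_path_refl: "cost_path s 0 s"
| cost_path_step: "step R s a t \<Longrightarrow> cost_path t n u \<Longrightarrow> cost_path s (if s \<approx> t then n else Suc n) u"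

lemma cost_path_trans: "cost_path s n u \<Longrightarrow> cost_path u m v \<Longrightarrow> cost_path s (n + m) v"
proof (induction rule: cost_path.induct)
  case (cost_path_refl s)
  then show ?case by simp
next
  case (cost_path_step s a t n u)
  have "cost_path s (if s \<approx> t then n + m else Suc (n + m)) v"
    using cost_path.cost_path_step[OF cost_path_step.hyps(1) cost_path_step.IH[OF cost_path_step.prems]] .
  then show ?case by (simp split: if_splits)
qed

lemma cost_path_of_steps: "steps R s w u \<Longrightarrow> \<exists>n. cost_path s n u"
  by (induction rule: steps.induct) (auto intro: cost_path.intros)

lemma bbisim_of_cost_path_0:
  assumes "cost_path s 0 u"
  shows "s \<approx> u"
proof -
  have "cost_path x n y \<Longrightarrow> n = 0 \<Longrightarrow> x \<approx> y" for x n y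
  proof (induction rule: cost_path.induct)
    case (cost_path_refl x)
    show ?case by (rule bbisim_refl)
  next
    case (cost_path_step x a t n y)
    then have "x \<approx> t" "t \<approx> y" by (simp_all split: if_splits)
    then show ?case by (rule bbisim_trans)
  qed
  then show ?thesis using assms by blast
qed

lemma cost_path_0_of_tau_path: "tau_path ((\<approx>) s) t t1 \<Longrightarrow> s \<approx> t \<Longrightarrow> cost_path t 0 t1"
proof (induction rule: tau_path.induct)
  case (tau_path_refl t)
  show ?case by (rule cost_path_refl)
next
  case (tau_path_step t t2 u)
  have "t \<approx> t2" using bbisim_trans[OF bbisim_sym tau_path_step.hyps(2)] tau_path_step.prems .
  then show ?case
    using cost_path.cost_path_step[OF tau_path_step.hyps(1) tau_path_step.IH[OF tau_path_step.hyps(2)]]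
    by simp
qed

lemma cost_path_0_to_Nil: "steps R t w [] \<Longrightarrow> t \<approx> [] \<Longrightarrow> cost_path t 0 []"
proof (induction t w "[] :: 'v list" rule: steps.induct)
  case steps_nil
  show ?case by (rule cost_path_refl)
next
  case (steps_cons s a t w)
  \<comment> \<open>\<open>[]\<close> has no moves, so every move of a state bisimilar to it is an inert \<open>\<tau>\<close>-move\<close>
  have "a = tau \<and> t \<approx> [] \<or> (\<exists>t1 t'. tau_path ((\<approx>) s) [] t1 \<and> step R t1 a t' \<and> t \<approx> t')"
    using bbisim_transfer[OF steps_cons.prems] steps_cons(1) unfolding transfer_def by blast
  then have "t \<approx> []" by (auto dest: tau_path_Nil)
  moreover have "s \<approx> t" using bbisim_trans[OF steps_cons.prems bbisim_sym[OF calculation]] .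
  ultimately show ?case
    using cost_path.cost_path_step[OF steps_cons(1) steps_cons(3)] by simp
qed

lemma cost_path_transfer:
  assumes "cost_path s n u" and "s \<approx> t"
  shows "\<exists>t'. cost_path t n t' \<and> u \<approx> t'"
  using assms
proof (induction arbitrary: t rule: cost_path.induct)
  case (cost_path_refl s)
  then show ?case using cost_path.cost_path_refl by blast
next
  case (cost_path_step s a s1 n u)
  consider "a = tau" "s1 \<approx> t"
    | t1 t2 where "tau_path ((\<approx>) s) t t1" "step R t1 a t2" "s1 \<approx> t2"
    using bbisim_transfer[OF cost_path_step.prems] cost_path_step.hyps(1)
    unfolding transfer_def by blast
  then show ?case
  proof cases
    case 1
    have "s \<approx> s1" using bbisim_trans[OF cost_path_step.prems bbisim_sym[OF 1(2)]] .
    then show ?thesis using cost_path_step.IH[OF 1(2)] by simp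
  next
    case (2 t1 t2)
    have "s \<approx> t1" using tau_path_end[OF 2(1)] cost_path_step.prems by blast
    have inert_iff: "t1 \<approx> t2 \<longleftrightarrow> s \<approx> s1"
    proof
      assume "t1 \<approx> t2"
      then show "s \<approx> s1"
        using bbisim_trans[OF bbisim_trans[OF \<open>s \<approx> t1\<close>] bbisim_sym[OF 2(3)]] by blast
    next
      assume "s \<approx> s1"
      then show "t1 \<approx> t2"
        using bbisim_trans[OF bbisim_trans[OF bbisim_sym[OF \<open>s \<approx> t1\<close>]] 2(3)] by blast
    qed
    obtain t' where t': "cost_path t2 n t'" "u \<approx> t'"
      using cost_path_step.IH[OF 2(3)] by blast
    have "cost_path t (0 + (if t1 \<approx> t2 then n else Suc n)) t'"
      by (rule cost_path_trans[OF cost_path_0_of_tau_path[OF 2(1) cost_path_step.prems]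
            cost_path.cost_path_step[OF 2(2) t'(1)]])
    then show ?thesis using t'(2) inert_iff by auto
  qed
qed

lemma cost_path_append_split:
  assumes "cost_path (e @ z) n []"
  shows "\<exists>n1 n2. n = n1 + n2 \<and> cost_path (e @ z) n1 z \<and> cost_path z n2 []"
proof -
  have "cost_path x n v \<Longrightarrow> v = [] \<Longrightarrow> x = e @ z \<Longrightarrow>
        \<exists>n1 n2. n = n1 + n2 \<and> cost_path x n1 z \<and> cost_path z n2 []" for x n v e
  proof (induction arbitrary: e rule: cost_path.induct)
    case (cost_path_refl x)
    then show ?case by (auto intro: cost_path.cost_path_refl)
  next
    case (cost_path_step x a t n v)
    show ?case
    proof (cases e)
      case Nil
      then show ?thesis
        using cost_path.cost_path_step[OF cost_path_step.hyps] cost_path_step.prems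
        by (intro exI[of _ 0] exI[of _ "if x \<approx> t then n else Suc n"])
          (auto intro: cost_path.cost_path_refl)
    next
      case (Cons A e')
      then obtain al where "t = (al @ e') @ z"
        using cost_path_step.hyps(1) cost_path_step.prems(2) by (auto simp: step_Cons)
      then obtain n1 n2 where n: "n = n1 + n2" "cost_path t n1 z" "cost_path z n2 []"
        using cost_path_step.IH[OF cost_path_step.prems(1)] by blast
      have "cost_path x (if x \<approx> t then n1 else Suc n1) z"
        by (rule cost_path.cost_path_step[OF cost_path_step.hyps(1) n(2)])
      then show ?thesis using n(1,3) by (intro exI[of _ "if x \<approx> t then n1 else Suc n1"] exI[of _ n2]) auto
    qed
  qed
  then show ?thesis using assms by blast
qed

definition branching_norm :: "'v list \<Rightarrow> nat" where
  "branching_norm s = (LEAST n. cost_path s n [])"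

lemma cost_path_branching_norm:
  assumes "normed R"
  shows "cost_path s (branching_norm s) []"
proof -
  have "\<exists>n. cost_path s n []" using normed_steps_Nil[OF assms] cost_path_of_steps by blast
  then show ?thesis unfolding branching_norm_def by (rule LeastI_ex)
qed

lemma branching_norm_le: "cost_path s n [] \<Longrightarrow> branching_norm s \<le> n"
  unfolding branching_norm_def by (rule Least_le)

lemma branching_norm_le_bbisim:
  assumes "normed R" and "s \<approx> t"
  shows "branching_norm t \<le> branching_norm s"
proof -
  obtain t' where t': "cost_path t (branching_norm s) t'" "[] \<approx> t'"
    using cost_path_transfer[OF cost_path_branching_norm[OF assms(1)] assms(2)] by blast
  obtain w where "steps R t' w []" using normed_steps_Nil[OF assms(1)] by blast
  then have "cost_path t' 0 []" using cost_path_0_to_Nil bbisim_sym[OF t'(2)] by blast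
  then have "cost_path t (branching_norm s + 0) []" by (rule cost_path_trans[OF t'(1)])
  then show ?thesis using branching_norm_le by simp
qed

lemma branching_norm_bbisim: "normed R \<Longrightarrow> s \<approx> t \<Longrightarrow> branching_norm s = branching_norm t"
  by (simp add: antisym branching_norm_le_bbisim bbisim_sym)

lemma bbisim_drop_prefix:
  assumes "normed R" and "e @ z @ g \<approx> g"
  shows "z @ g \<approx> g"
proof -
  obtain n1 n2 where n: "branching_norm (e @ z @ g) = n1 + n2" "cost_path (z @ g) n2 []"
    using cost_path_append_split[OF cost_path_branching_norm[OF assms(1)]] by blast
  then obtain m1 m2 where m: "n2 = m1 + m2" "cost_path (z @ g) m1 g" "cost_path g m2 []"
    using cost_path_append_split[of z g] by blast
  have "branching_norm g \<le> m2" using m(3) by (rule branching_norm_le)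
  moreover have "branching_norm (e @ z @ g) = branching_norm g"
    by (rule branching_norm_bbisim[OF assms])
  ultimately have "m1 = 0" using n(1) m(1) by simp
  then show ?thesis using m(2) bbisim_of_cost_path_0 by blast
qed

lemma bbisim_absorbed_member:
  assumes "normed R" and "alpha @ gamma \<approx> gamma" and "X \<in> set alpha"
  shows "X # gamma \<approx> gamma"
proof -
  obtain e z where alpha: "alpha = e @ X # z" using assms(3) by (meson split_list)
  have "z @ gamma \<approx> gamma"
    using bbisim_drop_prefix[OF assms(1), of "e @ [X]" z] assms(2) alpha by simp
  then have "X # z @ gamma \<approx> X # gamma" using bbisim_append_left[of _ _ "[X]"] by simp
  moreover have "X # z @ gamma \<approx> gamma"
    using bbisim_drop_prefix[OF assms(1), of e "X # z"] assms(2) alpha by simp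
  ultimately show ?thesis by (rule bbisim_trans[OF bbisim_sym])
qed

lemma bbisim_absorbed_if_members: "\<forall>X\<in>set alpha. X # gamma \<approx> gamma \<Longrightarrow> alpha @ gamma \<approx> gamma"
proof (induction alpha)
  case Nil
  show ?case by (simp add: bbisim_refl)
next
  case (Cons X alpha)
  then have "X # alpha @ gamma \<approx> X # gamma" using bbisim_append_left[of _ _ "[X]"] by simp
  moreover have "X # gamma \<approx> gamma" using Cons.prems by simp
  ultimately show ?case by (simp add: bbisim_trans)
qed

end

theorem proposition4p6:
  fixes R :: "('v::finite \<times> 'a::finite \<times> 'v list) set"
    and tau :: 'a
    and alpha gamma :: "'v list"
  assumes "finite R"
    and "normed R"
  shows "bbisim R tau (alpha @ gamma) gamma \<longleftrightarrow> set alpha \<subseteq> R_gamma R tau gamma"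
  unfolding R_gamma_def
  by (auto intro: bbisim_absorbed_if_members bbisim_absorbed_member[OF assms(2)])

end
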